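(* Let $\mathcal X$ be a real normed space and $\mathcal Y$ a normed space. Let $f:\mathcal X\to\mathcal Y$ be a mapping such that $\|f(x+y)-f(x-y)\|\le\varepsilon$ for some $\varepsilon>0$ and for all $x,y\in\mathcal X$ with $x\perp y$. Then there is an orthogonally constant mapping $c:\mathcal X\to\mathcal Y$ such that $\|f(x)-c(x)\|\le\varepsilon$ for all $x\in\mathcal X$.
   Context: For $x,y$ in a real normed space $\mathcal X$, isosceles orthogonality is defined by $x\perp y$ if and only if $\|x+y\|=\|x-y\|$. A mapping $c:\mathcal X\to\mathcal Y$ is called orthogonally constant if $c(x+y)=c(x-y)$ for all $x,y\in\mathcal X$ with $x\perp y$. *)

theory Defs
  imports "HOL-Analysis.Analysis"
begin

definition iso_orth :: "'a::real_normed_vector \<Rightarrow> 'a \<Rightarrow> bool" where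
  "iso_orth x y \<longleftrightarrow> norm (x + y) = norm (x - y)"

definition orth_constant :: "('a::real_normed_vector \<Rightarrow> 'b) \<Rightarrow> bool" where
  "orth_constant c \<longleftrightarrow> (\<forall>x y. iso_orth x y \<longrightarrow> c (x + y) = c (x - y))"

end

theory Submission
  imports Defs
begin

text \<open>A mapping that factors through the norm is orthogonally constant. On the other hand, any two
  vectors x, z of equal norm are x = u + v and z = u - v with u = (x + z)/2 and v = (x - z)/2,
  and then u \<perp> v; so the hypothesis gives \<open>\<parallel>f x - f z\<parallel> \<le> \<epsilon>\<close>. Hence c(x) := f(z),
  for one fixed vector z of norm \<open>\<parallel>x\<parallel>\<close>, works.\<close>

lemma orth_constant_comp_norm: "orth_constant (\<lambda>x. g (norm x))"
  unfolding orth_constant_def iso_orth_def by simp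

lemma equal_norm_iso_orth_sum_diff:
  fixes x z :: "'a::real_normed_vector"
  assumes "norm x = norm z"
  obtains u v where "iso_orth u v" "u + v = x" "u - v = z"
proof
  let ?u = "(1/2) *\<^sub>R (x + z)" and ?v = "(1/2) *\<^sub>R (x - z)"
  show sum: "?u + ?v = x"
    by (simp add: algebra_simps flip: scaleR_add_left)
  show diff: "?u - ?v = z"
    by (simp add: algebra_simps flip: scaleR_add_left)
  show "iso_orth ?u ?v"
    unfolding iso_orth_def sum diff using assms .
qed

lemma norm_diff_le_if_equal_norm:
  fixes f :: "'a::real_normed_vector \<Rightarrow> 'b::real_normed_vector"
  assumes "\<And>x y. iso_orth x y \<Longrightarrow> norm (f (x + y) - f (x - y)) \<le> \<epsilon>"
    and "norm x = norm z"
  shows "norm (f x - f z) \<le> \<epsilon>"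
proof -
  obtain u v where "iso_orth u v" "u + v = x" "u - v = z"
    using equal_norm_iso_orth_sum_diff[OF assms(2)] .
  with assms(1) show ?thesis by blast
qed

theorem proposition2p4:
  fixes f :: "'a::real_normed_vector \<Rightarrow> 'b::real_normed_vector"
    and \<epsilon> :: real
  assumes "\<epsilon> > 0"
    and "\<And>x y. iso_orth x y \<Longrightarrow> norm (f (x + y) - f (x - y)) \<le> \<epsilon>"
  shows "\<exists>c :: 'a \<Rightarrow> 'b. orth_constant c \<and> (\<forall>x. norm (f x - c x) \<le> \<epsilon>)"
proof (intro exI conjI allI)
  define g where "g r = f (SOME z. norm z = r)" for r
  show "orth_constant (\<lambda>x. g (norm x))"
    by (rule orth_constant_comp_norm)
  fix x :: 'a
  have rep: "norm x = norm (SOME z::'a. norm z = norm x)"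
    by (rule someI [where P = "\<lambda>z. norm z = norm x", OF refl, symmetric])
  show "norm (f x - g (norm x)) \<le> \<epsilon>"
    unfolding g_def using assms(2) rep by (rule norm_diff_le_if_equal_norm)
qed

end
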